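(* Let $D$ be a Dyck path of length $2n$ and let $D_1\sqsubset D_2\sqsubset\cdots\sqsubset D_n=D$ be an $n$-chain of Dyck shapes ending at $D$; set $D_0$ to be the empty path. Fill $S(D)$ by putting one dot in the leftmost cell (the cell with smallest first coordinate) of each ribbon $S(D_i)\setminus S(D_{i-1})$, $1\le i\le n$. Then the result is a Laguerre history of shape $D$, and this construction is a bijection between $n$-chains of Dyck shapes ending at $D$ and Laguerre histories of shape $D$.
   Context: A Dyck path of length $2m$ is a lattice path from $(0,0)$ to $(2m,0)$ with steps $\nearrow=(1,1)$, $\searrow=(1,-1)$ never going below the $x$-axis; $P(x)$ denotes its height at abscissa $x$. A cell is a point $(a,b)\in\mathbb{Z}^2$ with $b\ge0$, $a+b$ even (the tilted square with vertices $(a,b),(a+1,b\pm1),(a+2,b)$). The Dyck shape of $P$ (length $2m$) is $S(P)=\{(a,b): b\ge0,\ a+b\text{ even},\ 0\le a\le 2m-2,\ b+1\le P(a+1)\}$. Cells are adjacent if they differ by $(\pm1,\pm1)$. A ribbon is a nonempty set of cells, connected for adjacency, containing no four cells $(a,b),(a+1,b+1),(a+1,b-1),(a+2,b)$. For Dyck paths $D$ of length $2m$ and $E$ of length $2m+2$, $D\sqsubset E$ means $S(D)\subseteq S(E)$ and $S(E)\setminus S(D)$ is a ribbon. An $n$-chain of Dyck shapes is a sequence $D_1\sqsubset\cdots\sqsubset D_n$ of Dyck paths with $D_i$ of length $2i$; it ends at $D_n$. The column $a$ of $S(D)$ is the set of its cells with first coordinate $a$; it is below a step $\nearrow$ if the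 $(a+1)$-st step of $D$ is $\nearrow$. A Laguerre history of shape $D$ (length $2n$) is a filling of $S(D)$ with $n$ dots (at most one per cell) such that each column below a step $\nearrow$ contains exactly one dot and the other columns contain none. *)

theory Defs
  imports Main
begin

text \<open>A path is a list of steps: True = up step (1,1), False = down step (1,-1).\<close>
type_synonym path = "bool list"
type_synonym cell = "int \<times> int"

definition height :: "path \<Rightarrow> nat \<Rightarrow> int" where
  "height P x = (\<Sum>s\<leftarrow>take x P. if s then 1 else -1)"

definition dyck_path :: "nat \<Rightarrow> path \<Rightarrow> bool" where
  "dyck_path m P \<longleftrightarrow> length P = 2 * m \<and> (\<forall>x \<le> 2 * m. 0 \<le> height P x) \<and> height P (2 * m) = 0"

definition shape :: "path \<Rightarrow> cell set" where
  "shape P = {(a, b). 0 \<le> b \<and> even (a + b) \<and> 0 \<le> a \<and> a \<le> int (length P) - 2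
                 \<and> b + 1 \<le> height P (nat (a + 1))}"

definition adjacent :: "cell \<Rightarrow> cell \<Rightarrow> bool" where
  "adjacent c d \<longleftrightarrow> \<bar>fst c - fst d\<bar> = 1 \<and> \<bar>snd c - snd d\<bar> = 1"

definition connected_cells :: "cell set \<Rightarrow> bool" where
  "connected_cells R \<longleftrightarrow>
     (\<forall>c\<in>R. \<forall>d\<in>R. (\<lambda>x y. x \<in> R \<and> y \<in> R \<and> adjacent x y)\<^sup>*\<^sup>* c d)"

definition ribbon :: "cell set \<Rightarrow> bool" where
  "ribbon R \<longleftrightarrow> R \<noteq> {} \<and> connected_cells R \<and>
     \<not> (\<exists>a b. (a, b) \<in> R \<and> (a + 1, b + 1) \<in> R \<and> (a + 1, b - 1) \<in> R \<and> (a + 2, b) \<in> R)"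

definition covered :: "path \<Rightarrow> path \<Rightarrow> bool" where
  "covered D E \<longleftrightarrow> length E = length D + 2 \<and> shape D \<subseteq> shape E \<and> ribbon (shape E - shape D)"

text \<open>A chain D_1 \<sqsubset> ... \<sqsubset> D_n is the list [D_1, ..., D_n];
  chain_path Ds i is D_i, with D_0 the empty path.\<close>
definition chain_path :: "path list \<Rightarrow> nat \<Rightarrow> path" where
  "chain_path Ds i = (if i = 0 then [] else Ds ! (i - 1))"

definition chains_ending :: "nat \<Rightarrow> path \<Rightarrow> path list set" where
  "chains_ending n D = {Ds. length Ds = n
      \<and> (\<forall>i\<in>{1..n}. dyck_path i (chain_path Ds i))
      \<and> (\<forall>i\<in>{1..<n}. covered (chain_path Ds i) (chain_path Ds (Suc i)))
      \<and> chain_path Ds n = D}"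

text \<open>Column a of S(D) is below an up step iff the (a+1)-st step of D is up.\<close>
definition laguerre_history :: "nat \<Rightarrow> path \<Rightarrow> cell set \<Rightarrow> bool" where
  "laguerre_history n D F \<longleftrightarrow> F \<subseteq> shape D \<and> card F = n \<and>
     (\<forall>a. card {b. (a, b) \<in> F} =
            (if 0 \<le> a \<and> a < int (length D) \<and> D ! nat a then 1 else 0))"

definition leftmost :: "cell set \<Rightarrow> cell" where
  "leftmost R = (THE c. c \<in> R \<and> (\<forall>c'\<in>R. fst c \<le> fst c'))"

definition ribbon_of :: "path list \<Rightarrow> nat \<Rightarrow> cell set" where
  "ribbon_of Ds i = shape (chain_path Ds i) - shape (chain_path Ds (i - 1))"

definition chain_filling :: "nat \<Rightarrow> path list \<Rightarrow> cell set" where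
  "chain_filling n Ds = (\<lambda>i. leftmost (ribbon_of Ds i)) ` {1..n}"

end

theory Submission
  imports Defs
begin

text \<open>
  If \<open>D\<close> has semilength \<open>k + 1\<close>, the paths \<open>D' \<sqsubset> D\<close> are exactly those obtained by turning an up
  step \<open>a\<close>, after which \<open>D\<close> stays at height at least 2, into a down step and dropping the final
  peak. The ribbon \<open>S(D) - S(D')\<close> then consists of the top cell of every column from \<open>a\<close> to the
  last one, so its leftmost cell is the top cell \<open>(a, height D a)\<close> below the up step \<open>a\<close>.
  Conversely, in a Laguerre history of shape \<open>D\<close> the rightmost dot sitting in the top cell of its
  column lies below such a removable up step \<open>a\<close>, and deleting it leaves a Laguerre history of
  shape \<open>D'\<close>. Thus chains ending at \<open>D\<close> and Laguerre histories of shape \<open>D\<close> decompose over the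
  same removable up steps, compatibly with the filling, and induction on \<open>n\<close> gives the bijection.
\<close>

lemma height_0 [simp]: "height P 0 = 0"
  by (simp add: height_def)

lemma height_Suc:
  "height P (Suc x) = height P x + (if x < length P then if P ! x then 1 else -1 else 0)"
  by (cases "x < length P") (simp_all add: height_def take_Suc_conv_app_nth)

lemma abs_height_Suc_diff: "\<bar>height P (Suc x) - height P x\<bar> \<le> 1"
  by (simp add: height_Suc)

lemma height_Suc_cases:
  "x < length P \<Longrightarrow> height P (Suc x) = height P x + 1 \<or> height P (Suc x) = height P x - 1"
  by (simp add: height_Suc)

lemma nth_iff_height_less:
  "x < length P \<Longrightarrow> P ! x \<longleftrightarrow> height P x < height P (Suc x)"
  by (simp add: height_Suc)

lemma height_le: "height P x \<le> int x"
  by (induction x) (auto simp: height_Suc)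

lemma even_height_add: "x \<le> length P \<Longrightarrow> even (height P x + int x)"
  by (induction x) (auto simp: height_Suc)

lemma height_beyond: "length P \<le> x \<Longrightarrow> height P x = height P (length P)"
  by (simp add: height_def)

lemma height_take: "height (take k P) x = height P (min x k)"
  by (simp add: height_def min_def)

lemma height_list_update_down:
  "a < length P \<Longrightarrow> P ! a \<Longrightarrow> height (P[a := False]) x = height P x - (if a < x then 2 else 0)"
proof (induction x)
  case (Suc x)
  then show ?case by (cases "a = x") (auto simp: height_Suc nth_list_update)
qed simp

lemma path_eqI_height:
  assumes "length P = length Q" and "\<And>x. x \<le> length P \<Longrightarrow> height P x = height Q x"
  shows "P = Q"
proof (rule nth_equalityI)
  fix i assume "i < length P"
  then show "P ! i = Q ! i"
    using assms nth_iff_height_less[of i P] nth_iff_height_less[of i Q] by simp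
qed (rule assms(1))

lemma dyck_path_height_nonneg: "dyck_path m P \<Longrightarrow> 0 \<le> height P x"
  by (cases "x \<le> 2 * m") (auto simp: dyck_path_def height_beyond)

lemma dyck_path_height_end: "dyck_path m P \<Longrightarrow> 2 * m \<le> x \<Longrightarrow> height P x = 0"
  by (auto simp: dyck_path_def height_beyond)

lemma dyck_path_Nil_iff: "dyck_path 0 P \<longleftrightarrow> P = []"
  by (auto simp: dyck_path_def height_def)

lemma dyck_path_length: "dyck_path m P \<Longrightarrow> length P = 2 * m"
  by (simp add: dyck_path_def)

lemma dyck_path_Suc_ends:
  assumes "dyck_path (Suc k) D"
  shows "D ! 0" and "height D (2 * k + 1) = 1" and "\<not> D ! (2 * k + 1)"
proof -
  have L: "length D = 2 * k + 2"
    using dyck_path_length[OF assms] by simp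
  show "D ! 0"
    using height_Suc[of D 0] dyck_path_height_nonneg[OF assms, of 1] L
    by (auto split: if_splits)
  have "height D (Suc (2 * k + 1)) = 0"
    using dyck_path_height_end[OF assms] by simp
  then show "height D (2 * k + 1) = 1" and "\<not> D ! (2 * k + 1)"
    using height_Suc[of D "2 * k + 1"] dyck_path_height_nonneg[OF assms, of "2 * k + 1"] L
    by (auto split: if_splits)
qed

lemma mem_shape_iff:
  "(int x, b) \<in> shape P \<longleftrightarrow>
     0 \<le> b \<and> even (int x + b) \<and> x + 2 \<le> length P \<and> b + 1 \<le> height P (Suc x)"
proof -
  have "nat (int x + 1) = Suc x" by simp
  then show ?thesis by (auto simp: shape_def)
qed

lemma shape_cell_nat: "c \<in> shape P \<Longrightarrow> \<exists>x b. c = (int x, b)"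
  by (auto simp: shape_def intro!: exI[of _ "nat (fst c)"])

lemma finite_shape: "finite (shape P)"
proof (rule finite_subset)
  show "shape P \<subseteq> {0..int (length P)} \<times> {0..int (length P)}"
  proof
    fix c assume "c \<in> shape P"
    moreover obtain a b where "c = (a, b)" by force
    moreover have "height P (nat (a + 1)) \<le> int (nat (a + 1))" by (rule height_le)
    ultimately show "c \<in> {0..int (length P)} \<times> {0..int (length P)}"
      by (auto simp: shape_def)
  qed
qed simp

lemma shape_Nil: "shape [] = {}"
  by (auto simp: shape_def)

lemma ribbon_graph:
  fixes f :: "nat \<Rightarrow> int"
  assumes "a \<le> m" and step: "\<And>x. a \<le> x \<Longrightarrow> x < m \<Longrightarrow> \<bar>f (Suc x) - f x\<bar> = 1"
  shows "ribbon ((\<lambda>x. (int x, f x)) ` {a..m})"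
proof -
  define t where "t x = (int x, f x)" for x
  define R where "R = t ` {a..m}"
  define E where "E c d \<longleftrightarrow> c \<in> R \<and> d \<in> R \<and> adjacent c d" for c d
  have from_a: "E\<^sup>*\<^sup>* (t a) (t (a + j)) \<and> E\<^sup>*\<^sup>* (t (a + j)) (t a)" if "a + j \<le> m" for j
    using that
  proof (induction j)
    case (Suc j)
    have "t (a + j) \<in> R" "t (a + Suc j) \<in> R"
      using Suc.prems by (auto simp: R_def)
    moreover have "adjacent (t (a + j)) (t (a + Suc j))" "adjacent (t (a + Suc j)) (t (a + j))"
      using step[of "a + j"] Suc.prems by (auto simp: t_def adjacent_def)
    ultimately have "E (t (a + j)) (t (a + Suc j))" "E (t (a + Suc j)) (t (a + j))"
      by (simp_all add: E_def)
    with Suc show ?case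
      by (auto intro: rtranclp.rtrancl_into_rtrancl converse_rtranclp_into_rtranclp)
  qed simp
  have "connected_cells R"
    unfolding connected_cells_def
  proof (intro ballI)
    fix c d assume "c \<in> R" "d \<in> R"
    then obtain x y where "c = t x" "d = t y" "a \<le> x" "x \<le> m" "a \<le> y" "y \<le> m"
      by (auto simp: R_def)
    then have "E\<^sup>*\<^sup>* c (t a)" "E\<^sup>*\<^sup>* (t a) d"
      using from_a[of "x - a"] from_a[of "y - a"] by auto
    then show "(\<lambda>x y. x \<in> R \<and> y \<in> R \<and> adjacent x y)\<^sup>*\<^sup>* c d"
      unfolding E_def[abs_def] by (rule rtranclp_trans)
  qed
  moreover have "\<not> ((a0, b0 + 1) \<in> R \<and> (a0, b0 - 1) \<in> R)" for a0 b0
    by (auto simp: R_def t_def)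
  moreover have "R \<noteq> {}"
    using \<open>a \<le> m\<close> by (auto simp: R_def)
  ultimately show ?thesis
    unfolding ribbon_def R_def t_def by blast
qed

lemma leftmost_graph:
  assumes "a \<le> m"
  shows "leftmost ((\<lambda>x. (int x, f x)) ` {a..m}) = (int a, f a)"
proof -
  let ?R = "(\<lambda>x. (int x, f x)) ` {a..m}"
  have first: "(int a, f a) \<in> ?R \<and> (\<forall>c\<in>?R. fst (int a, f a) \<le> fst c)"
    using assms by auto
  have "c = (int a, f a)" if c: "c \<in> ?R \<and> (\<forall>c'\<in>?R. fst c \<le> fst c')" for c
  proof -
    obtain x where "c = (int x, f x)" "a \<le> x"
      using c by auto
    moreover have "fst c \<le> fst (int a, f a)"
      using c first by blast
    ultimately show ?thesis
      by simp
  qed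
  then show ?thesis
    unfolding leftmost_def using first by (rule the_equality[rotated])
qed

lemma connected_cells_column_between:
  assumes conn: "connected_cells R" and "(x, b) \<in> R" "(z, b') \<in> R" "x \<le> y" "y \<le> z"
  shows "\<exists>b''. (y, b'') \<in> R"
proof (rule ccontr)
  assume gap: "\<nexists>b''. (y, b'') \<in> R"
  let ?E = "\<lambda>c d. c \<in> R \<and> d \<in> R \<and> adjacent c d"
  have stays_left: "fst d < y" if "?E\<^sup>*\<^sup>* c d" "fst c < y" for c d
    using that
  proof (induction rule: rtranclp_induct)
    case (step d e)
    moreover have "fst e \<noteq> y"
      using gap step.hyps(2) by (metis prod.collapse)
    ultimately show ?case by (auto simp: adjacent_def)
  qed
  have "x < y"
    using gap assms(2,4) by fastforce
  then show False
    using stays_left[of "(x, b)" "(z, b')"] conn assms(2,3,5)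
    by (auto simp: connected_cells_def)
qed

definition up_steps :: "path \<Rightarrow> nat set" where
  "up_steps D = {x. x < length D \<and> D ! x}"

definition one_dot_per_column :: "cell set \<Rightarrow> nat set \<Rightarrow> bool" where
  "one_dot_per_column F U \<longleftrightarrow> (\<forall>x. card {b. (x, b) \<in> F} = (if 0 \<le> x \<and> nat x \<in> U then 1 else 0))"

lemma laguerre_history_iff:
  "laguerre_history m D F \<longleftrightarrow> F \<subseteq> shape D \<and> card F = m \<and> one_dot_per_column F (up_steps D)"
proof -
  have "(0 \<le> x \<and> x < int (length D) \<and> D ! nat x) \<longleftrightarrow> (0 \<le> x \<and> nat x \<in> up_steps D)" for x
    by (auto simp: up_steps_def)
  then show ?thesis
    by (simp add: laguerre_history_def one_dot_per_column_def)
qed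

lemma finite_laguerre_history: "laguerre_history m D F \<Longrightarrow> finite F"
  using finite_shape finite_subset by (auto simp: laguerre_history_def)

lemma finite_column:
  assumes "finite F"
  shows "finite {b. (x, b) \<in> F}"
proof (rule finite_subset)
  show "{b. (x, b) \<in> F} \<subseteq> snd ` F"
    by force
qed (use assms in simp)

lemma one_dot_per_column_dot:
  assumes "one_dot_per_column F U" "finite F" "(x, b) \<in> F"
  shows "\<exists>n. x = int n \<and> n \<in> U"
proof -
  have "card {b. (x, b) \<in> F} \<noteq> 0"
    using assms(3) finite_column[OF assms(2)] by auto
  then show ?thesis
    using assms(1) unfolding one_dot_per_column_def
    by (metis nat_0_le)
qed

lemma one_dot_per_column_exists:
  assumes "one_dot_per_column F U" "n \<in> U"
  shows "\<exists>b. (int n, b) \<in> F"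
proof -
  have "card {b. (int n, b) \<in> F} = 1"
    using assms by (simp add: one_dot_per_column_def)
  then show ?thesis
    by (auto simp: card_1_singleton_iff)
qed

lemma one_dot_per_column_insert_iff:
  assumes "finite F" "a \<notin> U" "(int a, y) \<notin> F"
  shows "one_dot_per_column (insert (int a, y) F) (insert a U) \<longleftrightarrow> one_dot_per_column F U"
proof -
  have other: "{b. (x, b) \<in> insert (int a, y) F} = {b. (x, b) \<in> F}"
    and "(0 \<le> x \<and> nat x \<in> insert a U) \<longleftrightarrow> (0 \<le> x \<and> nat x \<in> U)" if "x \<noteq> int a" for x
    using that by auto
  moreover have "{b. (int a, b) \<in> insert (int a, y) F} = insert y {b. (int a, b) \<in> F}"
    by auto
  moreover have "card (insert y {b. (int a, b) \<in> F}) = 1 \<longleftrightarrow> card {b. (int a, b) \<in> F} = 0"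
    using finite_column[OF assms(1), of "int a"] assms(3) by simp
  ultimately show ?thesis
    unfolding one_dot_per_column_def using assms(2) by (metis insertI1 nat_int of_nat_0_le_iff)
qed

text \<open>Turning the up step \<open>a\<close> of \<open>D\<close> into a down step and dropping the final peak lowers the path
  by 2 after \<open>a\<close>; \<open>removable_up D a\<close> says that the result is again a Dyck path.\<close>

definition removable_up :: "path \<Rightarrow> nat \<Rightarrow> bool" where
  "removable_up D a \<longleftrightarrow> a + 2 \<le> length D \<and> D ! a \<and>
     (\<forall>x. a < x \<and> x + 2 \<le> length D \<longrightarrow> 2 \<le> height D x)"

definition remove_up :: "path \<Rightarrow> nat \<Rightarrow> path" where
  "remove_up D a = take (length D - 2) (D[a := False])"

context
  fixes k :: nat and D :: path and a :: nat
  assumes dyck: "dyck_path (Suc k) D" and removable: "removable_up D a"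
begin

lemma removable_up_bounds: "a \<le> 2 * k" "D ! a"
  and removable_up_height_ge_2: "a < x \<Longrightarrow> x \<le> 2 * k \<Longrightarrow> 2 \<le> height D x"
  using removable dyck_path_length[OF dyck] by (auto simp: removable_up_def)

lemma length_remove_up: "length (remove_up D a) = 2 * k"
  using dyck_path_length[OF dyck] by (simp add: remove_up_def)

lemma height_remove_up:
  "height (remove_up D a) x = height D (min x (2 * k)) - (if a < min x (2 * k) then 2 else 0)"
  using removable dyck_path_length[OF dyck]
  by (simp add: remove_up_def removable_up_def height_take height_list_update_down)

lemma height_before_last_peak: "height D (2 * k) = (if a < 2 * k then 2 else 0)"
proof -
  have "height D (2 * k) = 0 \<or> height D (2 * k) = 2"
    using abs_height_Suc_diff[of D "2 * k"] dyck_path_Suc_ends(2)[OF dyck]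
      dyck_path_height_nonneg[OF dyck, of "2 * k"] even_height_add[of "2 * k" D]
      dyck_path_length[OF dyck]
    by (auto simp: abs_le_iff)
  moreover have "a = 2 * k \<Longrightarrow> height D (2 * k) = 0"
    using height_Suc[of D "2 * k"] removable_up_bounds(2) dyck_path_Suc_ends(2)[OF dyck]
      dyck_path_length[OF dyck] by auto
  ultimately show ?thesis
    using removable_up_height_ge_2[of "2 * k"] removable_up_bounds(1) by auto
qed

lemma dyck_path_remove_up: "dyck_path k (remove_up D a)"
  unfolding dyck_path_def
proof (intro conjI allI impI)
  fix x assume "x \<le> 2 * k"
  then show "0 \<le> height (remove_up D a) x"
    using height_remove_up[of x] removable_up_height_ge_2[of x]
      dyck_path_height_nonneg[OF dyck, of x] by auto
qed (use height_remove_up[of "2 * k"] height_before_last_peak length_remove_up in auto)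

lemma mem_shape_remove_up_iff:
  "(int x, b) \<in> shape (remove_up D a) \<longleftrightarrow>
     (int x, b) \<in> shape D \<and> (a \<le> x \<longrightarrow> b + 3 \<le> height D (Suc x))"
proof -
  have L: "length D = 2 * k + 2"
    using dyck_path_length[OF dyck] by simp
  have last2: "height D (Suc x) \<le> 2" if "2 * k \<le> Suc x" "x \<le> 2 * k" for x
  proof -
    have "Suc x = 2 * k \<or> Suc x = 2 * k + 1"
      using that by auto
    then show ?thesis
      using height_before_last_peak dyck_path_Suc_ends(2)[OF dyck] by auto
  qed
  show ?thesis
  proof
    assume "(int x, b) \<in> shape (remove_up D a)"
    then show "(int x, b) \<in> shape D \<and> (a \<le> x \<longrightarrow> b + 3 \<le> height D (Suc x))"
      using height_remove_up[of "Suc x"] length_remove_up L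
      by (auto simp: mem_shape_iff split: if_splits)
  next
    assume D: "(int x, b) \<in> shape D \<and> (a \<le> x \<longrightarrow> b + 3 \<le> height D (Suc x))"
    then have b: "0 \<le> b" "x \<le> 2 * k" "b + 1 \<le> height D (Suc x)"
      using L by (auto simp: mem_shape_iff)
    have "x + 2 \<le> 2 * k"
    proof (cases "a \<le> x")
      case True
      then show ?thesis
        using D b last2[of x] by linarith
    next
      case False
      then have "x = 2 * k - 1 \<Longrightarrow> height D (Suc x) = 0"
        using height_before_last_peak removable_up_bounds(1) by (cases k) auto
      then show ?thesis using b False removable_up_bounds(1) by fastforce
    qed
    then show "(int x, b) \<in> shape (remove_up D a)"
      using D height_remove_up[of "Suc x"] length_remove_up
      by (auto simp: mem_shape_iff)
  qed
qed

lemma shape_remove_up_subset: "shape (remove_up D a) \<subseteq> shape D"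
  using mem_shape_remove_up_iff shape_cell_nat by blast

lemma mem_shape_diff_remove_up_iff:
  "(int x, b) \<in> shape D - shape (remove_up D a) \<longleftrightarrow>
     a \<le> x \<and> x \<le> 2 * k \<and> b = height D (Suc x) - 1" (is "?lhs \<longleftrightarrow> ?rhs")
proof -
  have L: "length D = 2 * k + 2"
    using dyck_path_length[OF dyck] by simp
  show ?thesis
  proof
    assume ?lhs
    then have "0 \<le> b" "even (int x + b)" "x \<le> 2 * k" "b + 1 \<le> height D (Suc x)"
      "a \<le> x" "height D (Suc x) < b + 3"
      unfolding Diff_iff mem_shape_remove_up_iff using L by (auto simp: mem_shape_iff)
    moreover have "even (height D (Suc x) + int (Suc x))"
      using even_height_add[of "Suc x" D] L calculation(3) by simp
    ultimately show ?rhs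
      by presburger
  next
    assume rhs: ?rhs
    then have "Suc x \<le> 2 * k \<or> x = 2 * k"
      by auto
    then have "1 \<le> height D (Suc x)"
      using rhs removable_up_height_ge_2[of "Suc x"] dyck_path_Suc_ends(2)[OF dyck] by auto
    moreover have "even (height D (Suc x) + int (Suc x))"
      using even_height_add[of "Suc x" D] L rhs by simp
    ultimately show ?lhs
      unfolding Diff_iff mem_shape_remove_up_iff using L rhs
      by (auto simp: mem_shape_iff)
  qed
qed

lemma shape_diff_remove_up:
  "shape D - shape (remove_up D a) = (\<lambda>x. (int x, height D (Suc x) - 1)) ` {a..2 * k}"
proof (intro set_eqI iffI)
  fix c assume c: "c \<in> shape D - shape (remove_up D a)"
  then obtain x b where "c = (int x, b)"
    using shape_cell_nat by blast
  with c show "c \<in> (\<lambda>x. (int x, height D (Suc x) - 1)) ` {a..2 * k}"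
    using mem_shape_diff_remove_up_iff by auto
next
  fix c assume "c \<in> (\<lambda>x. (int x, height D (Suc x) - 1)) ` {a..2 * k}"
  then obtain x where "c = (int x, height D (Suc x) - 1)" "a \<le> x" "x \<le> 2 * k"
    by auto
  then show "c \<in> shape D - shape (remove_up D a)"
    using mem_shape_diff_remove_up_iff[of x "height D (Suc x) - 1"] by simp
qed

lemma covered_remove_up: "covered (remove_up D a) D"
  unfolding covered_def shape_diff_remove_up
proof (intro conjI ribbon_graph)
  fix x assume "a \<le> x" "x < 2 * k"
  then show "\<bar>height D (Suc (Suc x)) - 1 - (height D (Suc x) - 1)\<bar> = 1"
    using height_Suc[of D "Suc x"] dyck_path_length[OF dyck] by auto
qed (use length_remove_up dyck_path_length[OF dyck] shape_remove_up_subset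
      removable_up_bounds in auto)

lemma leftmost_shape_diff_remove_up:
  "leftmost (shape D - shape (remove_up D a)) = (int a, height D a)"
  using leftmost_graph[of a "2 * k"] removable_up_bounds height_Suc[of D a]
    dyck_path_length[OF dyck]
  by (simp add: shape_diff_remove_up)

lemma up_steps_remove_up:
  "up_steps D = insert a (up_steps (remove_up D a))" "a \<notin> up_steps (remove_up D a)"
proof -
  have L: "length D = 2 * k + 2"
    using dyck_path_length[OF dyck] by simp
  have rem: "remove_up D a ! x \<longleftrightarrow> x \<noteq> a \<and> D ! x" if "x < 2 * k" for x
    using that L removable_up_bounds by (auto simp: remove_up_def nth_list_update)
  have "\<not> D ! (2 * k)" if "a \<noteq> 2 * k"
    using that nth_iff_height_less[of "2 * k" D] L height_before_last_peak
      removable_up_bounds(1) dyck_path_Suc_ends(2)[OF dyck] by simp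
  then have "x \<in> up_steps D \<longleftrightarrow> x = a \<or> (x < 2 * k \<and> D ! x)" for x
    using L removable_up_bounds dyck_path_Suc_ends(3)[OF dyck]
    unfolding up_steps_def by (cases "x = 2 * k \<or> x = 2 * k + 1") auto
  then show "up_steps D = insert a (up_steps (remove_up D a))" "a \<notin> up_steps (remove_up D a)"
    using rem length_remove_up by (auto simp: up_steps_def)
qed

lemma peak_cell_notin_shape_remove_up:
  "a \<le> x \<Longrightarrow> (int x, height D x) \<notin> shape (remove_up D a)"
  using mem_shape_remove_up_iff abs_height_Suc_diff[of D x] by (simp add: abs_le_iff)

lemma peak_cell_in_shape: "(int a, height D a) \<in> shape D"
  using removable_up_bounds dyck_path_length[OF dyck]
    even_height_add[of a D] dyck_path_height_nonneg[OF dyck, of a] height_Suc[of D a]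
  by (auto simp: mem_shape_iff add.commute)

lemma laguerre_history_insert_peak:
  assumes F: "laguerre_history k (remove_up D a) F"
  shows "laguerre_history (Suc k) D (insert (int a, height D a) F)"
proof -
  have fin: "finite F"
    using F by (rule finite_laguerre_history)
  have sub: "F \<subseteq> shape (remove_up D a)"
    using F by (simp add: laguerre_history_def)
  then have notin: "(int a, height D a) \<notin> F"
    using peak_cell_notin_shape_remove_up by blast
  show ?thesis
    using F sub shape_remove_up_subset peak_cell_in_shape fin notin
      one_dot_per_column_insert_iff[OF fin up_steps_remove_up(2) notin]
    unfolding laguerre_history_iff up_steps_remove_up(1) by auto
qed

lemma laguerre_history_remove_peak:
  assumes F: "laguerre_history (Suc k) D F" and peak: "(int a, height D a) \<in> F"
    and sub: "F - {(int a, height D a)} \<subseteq> shape (remove_up D a)"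
  shows "laguerre_history k (remove_up D a) (F - {(int a, height D a)})"
proof -
  let ?F' = "F - {(int a, height D a)}"
  have fin: "finite ?F'"
    using finite_laguerre_history[OF F] by simp
  have card: "card ?F' = k"
    using F peak fin by (simp add: laguerre_history_def)
  have "one_dot_per_column (insert (int a, height D a) ?F') (insert a (up_steps (remove_up D a)))"
    using F peak by (simp add: laguerre_history_iff insert_absorb up_steps_remove_up(1)[symmetric])
  moreover have "(int a, height D a) \<notin> ?F'"
    by simp
  ultimately have "one_dot_per_column ?F' (up_steps (remove_up D a))"
    using one_dot_per_column_insert_iff[OF fin up_steps_remove_up(2)] by blast
  then show ?thesis
    using sub card by (simp add: laguerre_history_iff)
qed

end

context
  fixes k :: nat and D D' :: path
  assumes dyck: "dyck_path (Suc k) D" and dyck': "dyck_path k D'" and cov: "covered D' D"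
begin

lemma height_le_of_covered: "height D' x \<le> height D x"
proof (cases "1 \<le> height D' x \<and> x < 2 * k")
  case True
  then obtain y where y: "x = Suc y"
    by (cases x) auto
  have "(int y, height D' x - 1) \<in> shape D'"
    using True y even_height_add[of x D'] dyck_path_length[OF dyck'] by (auto simp: mem_shape_iff)
  then have "(int y, height D' x - 1) \<in> shape D"
    using cov by (auto simp: covered_def)
  then show ?thesis
    using y by (simp add: mem_shape_iff)
next
  case False
  then have "height D' x \<le> 0"
    using dyck_path_height_end[OF dyck', of x] by (cases "x < 2 * k") auto
  then show ?thesis
    using dyck_path_height_nonneg[OF dyck, of x] by simp
qed

lemma mem_shape_diff_iff:
  "(int x, b) \<in> shape D - shape D' \<longleftrightarrow>
     0 \<le> b \<and> even (int x + b) \<and> x \<le> 2 * k \<and>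
     b + 1 \<le> height D (Suc x) \<and> height D' (Suc x) \<le> b"
  using dyck_path_height_end[OF dyck', of "Suc x"] dyck_path_length[OF dyck] dyck_path_length[OF dyck']
  unfolding Diff_iff mem_shape_iff by auto

lemma column_in_shape_diff_iff:
  "(\<exists>b. (int x, b) \<in> shape D - shape D') \<longleftrightarrow> x \<le> 2 * k \<and> height D' (Suc x) < height D (Suc x)"
proof
  assume "x \<le> 2 * k \<and> height D' (Suc x) < height D (Suc x)"
  moreover have "even (height D (Suc x) + int (Suc x))"
    using even_height_add[of "Suc x" D] dyck_path_length[OF dyck] calculation by simp
  ultimately have "(int x, height D (Suc x) - 1) \<in> shape D - shape D'"
    unfolding mem_shape_diff_iff using dyck_path_height_nonneg[OF dyck', of "Suc x"] by auto
  then show "\<exists>b. (int x, b) \<in> shape D - shape D'" ..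
next
  assume "\<exists>b. (int x, b) \<in> shape D - shape D'"
  then obtain b where "(int x, b) \<in> shape D - shape D'" ..
  then show "x \<le> 2 * k \<and> height D' (Suc x) < height D (Suc x)"
    unfolding mem_shape_diff_iff by simp
qed

text \<open>By connectedness of the ribbon, the columns where \<open>D'\<close> lies below \<open>D\<close> form an interval
  ending at the last column.\<close>

lemma covered_height_profile:
  obtains a where "a \<le> 2 * k" and "\<And>x. x \<le> a \<Longrightarrow> height D' x = height D x"
    and "\<And>x. a < x \<Longrightarrow> x \<le> 2 * k \<Longrightarrow> height D' x < height D x"
proof -
  define col where "col x \<longleftrightarrow> x \<le> 2 * k \<and> height D' (Suc x) < height D (Suc x)" for x
  define a where "a = (LEAST x. col x)"
  have last: "col (2 * k)"
    using dyck_path_height_end[OF dyck'] dyck_path_Suc_ends(2)[OF dyck] by (simp add: col_def)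
  then have "col a"
    unfolding a_def by (rule LeastI)
  then have a: "a \<le> 2 * k"
    by (simp add: col_def)
  have before: "height D' x = height D x" if "x \<le> a" for x
  proof (cases x)
    case (Suc y)
    then have "\<not> col y"
      using that unfolding a_def by (intro not_less_Least) simp
    then show ?thesis
      using Suc that a height_le_of_covered[of x] by (simp add: col_def)
  qed simp
  have after: "height D' x < height D x" if x: "a < x" "x \<le> 2 * k" for x
  proof -
    obtain y where y: "x = Suc y" "a \<le> y"
      using x by (cases x) auto
    have "connected_cells (shape D - shape D')"
      using cov by (simp add: covered_def ribbon_def)
    moreover obtain b1 b2 where "(int a, b1) \<in> shape D - shape D'"
      and "(int (2 * k), b2) \<in> shape D - shape D'"
      using \<open>col a\<close> last column_in_shape_diff_iff unfolding col_def by blast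
    ultimately have "\<exists>b. (int y, b) \<in> shape D - shape D'"
      by (rule connected_cells_column_between) (use y x in auto)
    then show ?thesis
      using y column_in_shape_diff_iff by simp
  qed
  show thesis
    using a before after by (rule that)
qed

text \<open>Where \<open>D'\<close> lies exactly two units below \<open>D\<close>, the next step cannot increase the gap: that
  would put the four cells of a square into the ribbon.\<close>

lemma covered_gap_step:
  assumes "0 < w" "Suc w \<le> 2 * k" and gap: "height D w = height D' w + 2"
  shows "height D (Suc w) \<le> height D' (Suc w) + 2"
proof (rule ccontr)
  let ?h = "height D w"
  assume "\<not> ?thesis"
  then have up: "height D (Suc w) = ?h + 1" and down: "height D' (Suc w) = height D' w - 1"
    using height_Suc_cases[of w D] height_Suc_cases[of w D'] gap assms(2)
      dyck_path_length[OF dyck] dyck_path_length[OF dyck'] by auto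
  have next_up: "?h \<le> height D (Suc (Suc w))" and next_down: "height D' (Suc (Suc w)) \<le> height D' w"
    using abs_height_Suc_diff[of D "Suc w"] abs_height_Suc_diff[of D' "Suc w"] up down
    by (auto simp: abs_le_iff)
  obtain v where v: "w = Suc v"
    using assms(1) by (cases w) auto
  have "even (?h + int w)"
    using even_height_add[of w D] dyck_path_length[OF dyck] assms(2) by simp
  moreover have "0 \<le> height D' w"
    by (rule dyck_path_height_nonneg[OF dyck'])
  ultimately have "(int v, ?h - 1) \<in> shape D - shape D'"
    and "(int w, ?h) \<in> shape D - shape D'"
    and "(int w, ?h - 2) \<in> shape D - shape D'"
    and "(int (Suc w), ?h - 1) \<in> shape D - shape D'"
    unfolding mem_shape_diff_iff using v assms(2) gap up down next_up next_down by auto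
  then have "(int v, ?h - 1) \<in> shape D - shape D' \<and> (int v + 1, ?h - 1 + 1) \<in> shape D - shape D'
      \<and> (int v + 1, ?h - 1 - 1) \<in> shape D - shape D' \<and> (int v + 2, ?h - 1) \<in> shape D - shape D'"
    using v by (simp add: add.commute)
  then show False
    using cov unfolding covered_def ribbon_def by blast
qed

lemma covered_height_gap:
  assumes before: "\<And>x. x \<le> a \<Longrightarrow> height D' x = height D x"
    and after: "\<And>x. a < x \<Longrightarrow> x \<le> 2 * k \<Longrightarrow> height D' x < height D x"
  shows "a < x \<Longrightarrow> x \<le> 2 * k \<Longrightarrow> height D x = height D' x + 2"
proof (induction x)
  case (Suc x)
  have "even (height D (Suc x) + int (Suc x))" "even (height D' (Suc x) + int (Suc x))"
    using even_height_add dyck_path_length[OF dyck] dyck_path_length[OF dyck'] Suc.prems by auto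
  moreover have "height D' (Suc x) < height D (Suc x)"
    using after Suc.prems by blast
  moreover have "height D (Suc x) \<le> height D' (Suc x) + 2"
  proof (cases "a < x")
    case True
    then show ?thesis
      using covered_gap_step[of x] Suc by simp
  next
    case False
    then have "height D x = height D' x"
      using before Suc.prems by simp
    then show ?thesis
      using abs_height_Suc_diff[of D x] abs_height_Suc_diff[of D' x] by (simp add: abs_le_iff)
  qed
  ultimately show ?case
    by presburger
qed simp

lemma covered_imp_remove_up:
  obtains a where "removable_up D a" and "D' = remove_up D a"
proof -
  obtain a where a: "a \<le> 2 * k" and before: "\<And>x. x \<le> a \<Longrightarrow> height D' x = height D x"
    and after: "\<And>x. a < x \<Longrightarrow> x \<le> 2 * k \<Longrightarrow> height D' x < height D x"
    using covered_height_profile by blast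
  note gap = covered_height_gap[where a = a, OF before after]
  have L: "length D = 2 * k + 2"
    using dyck_path_length[OF dyck] by simp
  have "height D a < height D (Suc a)"
  proof (cases "Suc a \<le> 2 * k")
    case True
    then show ?thesis
      using gap[of "Suc a"] before[of a] abs_height_Suc_diff[of D' a] by (simp add: abs_le_iff)
  next
    case False
    then have "a = 2 * k"
      using a by simp
    then show ?thesis
      using before[of a] dyck_path_height_end[OF dyck'] dyck_path_Suc_ends(2)[OF dyck] by simp
  qed
  then have "removable_up D a"
    unfolding removable_up_def
    using a L nth_iff_height_less[of a D] gap dyck_path_height_nonneg[OF dyck'] by force
  moreover have "D' = remove_up D a"
  proof (rule path_eqI_height)
    show "length D' = length (remove_up D a)"
      using length_remove_up[OF dyck calculation] dyck_path_length[OF dyck'] by simp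
    fix x assume "x \<le> length D'"
    then show "height D' x = height (remove_up D a) x"
      using height_remove_up[OF dyck calculation, of x] before[of x] gap[of x]
        dyck_path_length[OF dyck'] by auto
  qed
  ultimately show thesis
    by (rule that)
qed

end

text \<open>Below an up step \<open>x\<close> the top cell of column \<open>x\<close> is \<open>(x, height D x)\<close>. Inverting the filling,
  the dot of the last ribbon is the rightmost dot lying in such a top cell.\<close>

definition last_top_dot :: "path \<Rightarrow> cell set \<Rightarrow> nat" where
  "last_top_dot D F = Max {x \<in> up_steps D. (int x, height D x) \<in> F}"

context
  fixes k :: nat and D :: path and F :: "cell set"
  assumes dyck: "dyck_path (Suc k) D" and history: "laguerre_history (Suc k) D F"
begin

lemma dot_height_bounds:
  assumes "(int x, b) \<in> F" "x \<in> up_steps D"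
  shows "0 \<le> b" "b \<le> height D x" "even (height D x - b)"
proof -
  have "(int x, b) \<in> shape D"
    using assms(1) history by (auto simp: laguerre_history_def)
  then have "0 \<le> b" "even (int x + b)" "b + 1 \<le> height D (Suc x)"
    by (simp_all add: mem_shape_iff)
  moreover have "height D (Suc x) = height D x + 1" "even (height D x + int x)"
    using assms(2) height_Suc[of D x] even_height_add[of x D] by (auto simp: up_steps_def)
  ultimately show "0 \<le> b" "b \<le> height D x" "even (height D x - b)"
    by presburger+
qed

lemma top_dot_of_low_up_step:
  assumes "x \<in> up_steps D" "height D x \<le> 1"
  shows "(int x, height D x) \<in> F"
proof -
  have "one_dot_per_column F (up_steps D)"
    using history by (simp add: laguerre_history_iff)
  then obtain b where b: "(int x, b) \<in> F"
    using one_dot_per_column_exists assms(1) by blast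
  then have "b = height D x"
    using dot_height_bounds[OF b assms(1)] assms(2) by presburger
  then show ?thesis
    using b by simp
qed

lemma last_top_dot_spec:
  "last_top_dot D F \<in> up_steps D" "(int (last_top_dot D F), height D (last_top_dot D F)) \<in> F"
  "\<And>x. x \<in> up_steps D \<Longrightarrow> (int x, height D x) \<in> F \<Longrightarrow> x \<le> last_top_dot D F"
proof -
  let ?A = "{x \<in> up_steps D. (int x, height D x) \<in> F}"
  have fin: "finite ?A"
    by (simp add: up_steps_def)
  moreover have "0 \<in> ?A"
    using dyck_path_Suc_ends(1)[OF dyck] dyck_path_length[OF dyck] top_dot_of_low_up_step[of 0]
    by (simp add: up_steps_def)
  ultimately have "Max ?A \<in> ?A"
    by (intro Max_in) auto
  then show "last_top_dot D F \<in> up_steps D"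
    "(int (last_top_dot D F), height D (last_top_dot D F)) \<in> F"
    by (simp_all add: last_top_dot_def)
  show "x \<le> last_top_dot D F" if "x \<in> up_steps D" "(int x, height D x) \<in> F" for x
    unfolding last_top_dot_def using fin that by simp
qed

text \<open>If the path came down to height at most 1 after the last top dot, the up step leaving that
  low point would carry a top dot as well.\<close>

lemma height_ge_2_after_last_top_dot:
  assumes x: "last_top_dot D F < x" "x \<le> 2 * k"
  shows "2 \<le> height D x"
proof (rule ccontr)
  let ?a = "last_top_dot D F"
  let ?S = "{x. ?a < x \<and> x \<le> 2 * k \<and> height D x \<le> 1}"
  have L: "length D = 2 * k + 2"
    using dyck_path_length[OF dyck] by simp
  assume "\<not> 2 \<le> height D x"
  then have "x \<in> ?S"
    using x by simp
  moreover have fin: "finite ?S"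
    by (rule finite_subset[of _ "{..2 * k}"]) auto
  ultimately have "Max ?S \<in> ?S"
    by (intro Max_in) auto
  then obtain y where y: "y = Max ?S" "?a < y" "y \<le> 2 * k" "height D y \<le> 1"
    by blast
  have above: "z \<le> y" if "z \<in> ?S" for z
    using fin that y(1) by simp
  have "height D y < height D (Suc y)"
  proof (cases "y = 2 * k")
    case True
    then have "even (height D y)"
      using even_height_add[of y D] L by simp
    then have "height D y = 0"
      using y(4) dyck_path_height_nonneg[OF dyck, of y] by presburger
    then show ?thesis
      using True dyck_path_Suc_ends(2)[OF dyck] by simp
  next
    case False
    then have "Suc y \<notin> ?S"
      using above[of "Suc y"] by linarith
    then show ?thesis
      using y False by simp
  qed
  then have "y \<in> up_steps D"
    using y L nth_iff_height_less[of y D] by (simp add: up_steps_def)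
  then have "y \<le> ?a"
    using top_dot_of_low_up_step y(4) last_top_dot_spec(3) by blast
  then show False
    using y by simp
qed

lemma removable_up_last_top_dot: "removable_up D (last_top_dot D F)"
proof -
  have "last_top_dot D F + 2 \<le> length D"
    using last_top_dot_spec(2) history by (auto simp: laguerre_history_def mem_shape_iff)
  then show ?thesis
    using last_top_dot_spec(1) height_ge_2_after_last_top_dot dyck_path_length[OF dyck]
    by (auto simp: removable_up_def up_steps_def)
qed

lemma dots_off_last_top_dot_in_shape_remove_up:
  "F - {(int (last_top_dot D F), height D (last_top_dot D F))}
     \<subseteq> shape (remove_up D (last_top_dot D F))"
proof
  let ?a = "last_top_dot D F"
  fix c assume c: "c \<in> F - {(int ?a, height D ?a)}"
  have one: "one_dot_per_column F (up_steps D)" and sub: "F \<subseteq> shape D"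
    using history by (auto simp: laguerre_history_iff)
  obtain x0 b where "c = (x0, b)"
    by (cases c)
  moreover obtain x where "x0 = int x" and x: "x \<in> up_steps D"
    using one_dot_per_column_dot[OF one finite_laguerre_history[OF history]] c calculation by blast
  ultimately have cxb: "c = (int x, b)"
    by simp
  have "b + 3 \<le> height D (Suc x)" if "?a \<le> x"
  proof -
    have "x \<noteq> ?a \<or> b \<noteq> height D ?a"
      using c cxb by auto
    then have "b \<noteq> height D x"
      using that last_top_dot_spec(3)[OF x] c cxb by fastforce
    moreover have dot: "(int x, b) \<in> F"
      using c cxb by simp
    ultimately have "b + 2 \<le> height D x"
      using dot_height_bounds[OF dot x] by presburger
    then show ?thesis
      using x height_Suc[of D x] by (simp add: up_steps_def)
  qed
  then show "c \<in> shape (remove_up D ?a)"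
    using mem_shape_remove_up_iff[OF dyck removable_up_last_top_dot] c cxb sub by auto
qed

lemma laguerre_history_decompose:
  obtains a F' where "removable_up D a" and "laguerre_history k (remove_up D a) F'"
    and "F = insert (int a, height D a) F'"
proof -
  let ?a = "last_top_dot D F"
  have "laguerre_history k (remove_up D ?a) (F - {(int ?a, height D ?a)})"
    using laguerre_history_remove_peak[OF dyck removable_up_last_top_dot history last_top_dot_spec(2)
        dots_off_last_top_dot_in_shape_remove_up] .
  moreover have "F = insert (int ?a, height D ?a) (F - {(int ?a, height D ?a)})"
    using last_top_dot_spec(2) by auto
  ultimately show thesis
    using removable_up_last_top_dot that by blast
qed

end

lemma insert_peak_cell_inj:
  assumes dyck: "dyck_path (Suc k) D"
    and removable: "removable_up D a1" "removable_up D a2"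
    and sub: "F1 \<subseteq> shape (remove_up D a1)" "F2 \<subseteq> shape (remove_up D a2)"
    and eq: "insert (int a1, height D a1) F1 = insert (int a2, height D a2) F2"
  shows "a1 = a2" and "F1 = F2"
proof -
  have peak_eq: "(int a1, height D a1) = (int a2, height D a2)" if "a1 \<le> a2 \<or> a2 \<le> a1"
    using that peak_cell_notin_shape_remove_up[OF dyck removable(1)]
      peak_cell_notin_shape_remove_up[OF dyck removable(2)] sub eq
    by (metis insertCI insertE subsetD)
  then show "a1 = a2"
    by fastforce
  then have "(int a1, height D a1) \<notin> F1" "(int a1, height D a1) \<notin> F2"
    using peak_cell_notin_shape_remove_up[OF dyck removable(1)]
      peak_cell_notin_shape_remove_up[OF dyck removable(2)] sub by auto
  then show "F1 = F2"
    using eq \<open>a1 = a2\<close> by (metis insert_ident)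
qed

lemma chain_path_snoc: "i \<le> length Ds \<Longrightarrow> chain_path (Ds @ [D]) i = chain_path Ds i"
  by (auto simp: chain_path_def nth_append)

lemma chain_path_snoc_last: "chain_path (Ds @ [D]) (Suc (length Ds)) = D"
  by (simp add: chain_path_def)

lemma chain_filling_snoc:
  assumes "length Ds = k"
  shows "chain_filling (Suc k) (Ds @ [D]) =
    insert (leftmost (shape D - shape (chain_path Ds k))) (chain_filling k Ds)"
proof -
  have "ribbon_of (Ds @ [D]) i = ribbon_of Ds i" if "i \<in> {1..k}" for i
  proof -
    have "i \<le> length Ds" "i - 1 \<le> length Ds"
      using that assms by auto
    then show ?thesis
      by (simp add: ribbon_of_def chain_path_snoc)
  qed
  moreover have "ribbon_of (Ds @ [D]) (Suc k) = shape D - shape (chain_path Ds k)"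
    using assms chain_path_snoc[of k Ds D] chain_path_snoc_last[of Ds D] by (simp add: ribbon_of_def)
  moreover have "{1..Suc k} = insert (Suc k) {1..k}"
    by auto
  ultimately show ?thesis
    unfolding chain_filling_def by simp
qed

lemma chains_ending_0: "chains_ending 0 D = (if D = [] then {[]} else {})"
  by (auto simp: chains_ending_def chain_path_def)

lemma dyck_path_of_chains_ending:
  assumes "Ds \<in> chains_ending k D"
  shows "dyck_path k D"
proof (cases k)
  case 0
  then show ?thesis
    using assms by (simp add: chains_ending_0 dyck_path_Nil_iff split: if_splits)
next
  case (Suc j)
  then show ?thesis
    using assms unfolding chains_ending_def by fastforce
qed

lemma covered_Nil:
  assumes "dyck_path (Suc 0) D"
  shows "covered [] D"
proof -
  have "removable_up D 0"
    using dyck_path_Suc_ends(1)[OF assms] dyck_path_length[OF assms]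
    by (auto simp: removable_up_def)
  moreover have "remove_up D 0 = []"
    using dyck_path_length[OF assms] by (simp add: remove_up_def)
  ultimately show ?thesis
    using covered_remove_up[OF assms] by metis
qed

lemma chains_ending_SucE:
  assumes "dyck_path (Suc k) D" and Ds: "Ds \<in> chains_ending (Suc k) D"
  obtains Ds' D' where "Ds = Ds' @ [D]" and "Ds' \<in> chains_ending k D'" and "covered D' D"
proof -
  have "length Ds = Suc k"
    using Ds by (simp add: chains_ending_def)
  then obtain Ds' E where split: "Ds = Ds' @ [E]" and len: "length Ds' = k"
    by (cases Ds rule: rev_cases) auto
  have prefix: "chain_path Ds i = chain_path Ds' i" if "i \<le> k" for i
    using that len split chain_path_snoc by simp
  have "E = D"
    using Ds split len chain_path_snoc_last[of Ds' E] by (simp add: chains_ending_def)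
  moreover have "Ds' \<in> chains_ending k (chain_path Ds' k)"
    unfolding chains_ending_def
  proof (intro CollectI conjI ballI refl len)
    show "dyck_path i (chain_path Ds' i)" if "i \<in> {1..k}" for i
    proof -
      have "dyck_path i (chain_path Ds i)"
        using that Ds by (force simp: chains_ending_def)
      then show ?thesis
        using that prefix[of i] by simp
    qed
    show "covered (chain_path Ds' i) (chain_path Ds' (Suc i))" if "i \<in> {1..<k}" for i
    proof -
      have "covered (chain_path Ds i) (chain_path Ds (Suc i))"
        using that Ds by (force simp: chains_ending_def)
      then show ?thesis
        using that prefix[of i] prefix[of "Suc i"] by simp
    qed
  qed
  moreover have "covered (chain_path Ds' k) D"
  proof (cases k)
    case 0
    then show ?thesis
      using covered_Nil assms by (simp add: chain_path_def)
  next
    case (Suc j)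
    then have "covered (chain_path Ds k) (chain_path Ds (Suc k))"
      using Ds by (force simp: chains_ending_def)
    then show ?thesis
      using Ds prefix[of k] by (simp add: chains_ending_def)
  qed
  ultimately show thesis
    using split that by blast
qed

lemma chains_ending_snoc:
  assumes "dyck_path (Suc k) D" and Ds': "Ds' \<in> chains_ending k D'" and cov: "covered D' D"
  shows "Ds' @ [D] \<in> chains_ending (Suc k) D"
proof -
  define Ds where "Ds = Ds' @ [D]"
  have len: "length Ds' = k" and last: "chain_path Ds' k = D'"
    using Ds' by (simp_all add: chains_ending_def)
  have prefix: "chain_path Ds i = chain_path Ds' i" if "i \<le> k" for i
    using that len chain_path_snoc by (simp add: Ds_def)
  have top: "chain_path Ds (Suc k) = D"
    using len chain_path_snoc_last[of Ds' D] by (simp add: Ds_def)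
  show ?thesis
    unfolding Ds_def[symmetric] chains_ending_def
  proof (intro CollectI conjI ballI top)
    show "length Ds = Suc k"
      using len by (simp add: Ds_def)
    show "dyck_path i (chain_path Ds i)" if "i \<in> {1..Suc k}" for i
      using that Ds' prefix[of i] top assms by (cases "i = Suc k") (auto simp: chains_ending_def)
    show "covered (chain_path Ds i) (chain_path Ds (Suc i))" if "i \<in> {1..<Suc k}" for i
      using that Ds' prefix[of i] prefix[of "Suc i"] top last cov
      by (cases "i = k") (auto simp: chains_ending_def)
  qed
qed

context
  fixes k :: nat and D :: path
  assumes dyck: "dyck_path (Suc k) D"
begin

lemma chains_ending_Suc:
  "chains_ending (Suc k) D =
     (\<Union>a\<in>{a. removable_up D a}. (\<lambda>Ds. Ds @ [D]) ` chains_ending k (remove_up D a))"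
proof (intro set_eqI iffI)
  fix Ds assume "Ds \<in> chains_ending (Suc k) D"
  then obtain Ds' D' where "Ds = Ds' @ [D]" "Ds' \<in> chains_ending k D'" "covered D' D"
    by (rule chains_ending_SucE[OF dyck])
  moreover obtain a where "removable_up D a" "D' = remove_up D a"
    using covered_imp_remove_up[OF dyck dyck_path_of_chains_ending calculation(3)] calculation(2)
    by blast
  ultimately show "Ds \<in> (\<Union>a\<in>{a. removable_up D a}. (\<lambda>Ds. Ds @ [D]) ` chains_ending k (remove_up D a))"
    by blast
next
  fix Ds assume "Ds \<in> (\<Union>a\<in>{a. removable_up D a}. (\<lambda>Ds. Ds @ [D]) ` chains_ending k (remove_up D a))"
  then obtain a Ds' where "removable_up D a" "Ds = Ds' @ [D]" "Ds' \<in> chains_ending k (remove_up D a)"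
    by blast
  then show "Ds \<in> chains_ending (Suc k) D"
    using chains_ending_snoc[OF dyck] covered_remove_up[OF dyck] by blast
qed

lemma chain_filling_snoc_remove_up:
  assumes "removable_up D a" and "Ds \<in> chains_ending k (remove_up D a)"
  shows "chain_filling (Suc k) (Ds @ [D]) = insert (int a, height D a) (chain_filling k Ds)"
  using assms chain_filling_snoc[of Ds k D] leftmost_shape_diff_remove_up[OF dyck]
  by (simp add: chains_ending_def)

lemma laguerre_histories_Suc:
  "{F. laguerre_history (Suc k) D F} =
     (\<Union>a\<in>{a. removable_up D a}.
        insert (int a, height D a) ` {F. laguerre_history k (remove_up D a) F})"
proof (intro set_eqI iffI)
  fix F assume "F \<in> {F. laguerre_history (Suc k) D F}"
  then obtain a F' where "removable_up D a" "laguerre_history k (remove_up D a) F'"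
    "F = insert (int a, height D a) F'"
    using laguerre_history_decompose[OF dyck] by blast
  then show "F \<in> (\<Union>a\<in>{a. removable_up D a}.
      insert (int a, height D a) ` {F. laguerre_history k (remove_up D a) F})"
    by blast
qed (auto intro: laguerre_history_insert_peak[OF dyck])

context
  assumes IH: "\<And>a. removable_up D a \<Longrightarrow> bij_betw (chain_filling k)
    (chains_ending k (remove_up D a)) {F. laguerre_history k (remove_up D a) F}"
begin

lemma image_chain_filling_Suc:
  "chain_filling (Suc k) ` chains_ending (Suc k) D = {F. laguerre_history (Suc k) D F}"
proof -
  have "chain_filling (Suc k) ` (\<lambda>Ds. Ds @ [D]) ` chains_ending k (remove_up D a) =
      insert (int a, height D a) ` {F. laguerre_history k (remove_up D a) F}"
    if "removable_up D a" for a
  proof -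
    have "chain_filling (Suc k) ` (\<lambda>Ds. Ds @ [D]) ` chains_ending k (remove_up D a) =
        insert (int a, height D a) ` chain_filling k ` chains_ending k (remove_up D a)"
      unfolding image_image
      by (intro image_cong) (simp_all add: chain_filling_snoc_remove_up[OF that])
    then show ?thesis
      using bij_betw_imp_surj_on[OF IH[OF that]] by simp
  qed
  then show ?thesis
    unfolding chains_ending_Suc laguerre_histories_Suc image_UN by simp
qed

lemma inj_on_chain_filling_Suc: "inj_on (chain_filling (Suc k)) (chains_ending (Suc k) D)"
proof (rule inj_onI)
  fix Ds1 Ds2
  assume "Ds1 \<in> chains_ending (Suc k) D" "Ds2 \<in> chains_ending (Suc k) D"
    and eq: "chain_filling (Suc k) Ds1 = chain_filling (Suc k) Ds2"
  then obtain a1 a2 Ds1' Ds2' where a: "removable_up D a1" "removable_up D a2"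
    and Ds: "Ds1 = Ds1' @ [D]" "Ds2 = Ds2' @ [D]"
    and Ds': "Ds1' \<in> chains_ending k (remove_up D a1)" "Ds2' \<in> chains_ending k (remove_up D a2)"
    unfolding chains_ending_Suc by blast
  have "chain_filling k Ds1' \<subseteq> shape (remove_up D a1)" "chain_filling k Ds2' \<subseteq> shape (remove_up D a2)"
    using bij_betw_apply[OF IH[OF a(1)] Ds'(1)] bij_betw_apply[OF IH[OF a(2)] Ds'(2)]
    by (simp_all add: laguerre_history_def)
  then have "a1 = a2" "chain_filling k Ds1' = chain_filling k Ds2'"
    using insert_peak_cell_inj[OF dyck a] eq Ds chain_filling_snoc_remove_up a Ds'
    by simp_all
  then show "Ds1 = Ds2"
    using Ds Ds' IH[OF a(1)] by (auto simp: bij_betw_def inj_on_def)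
qed

end

end

theorem bij_betw_chain_filling:
  "dyck_path n D \<Longrightarrow> bij_betw (chain_filling n) (chains_ending n D) {F. laguerre_history n D F}"
proof (induction n arbitrary: D)
  case 0
  then have "D = []"
    by (simp add: dyck_path_Nil_iff)
  moreover have "laguerre_history 0 [] F \<longleftrightarrow> F = {}" for F
    by (auto simp: laguerre_history_def shape_Nil)
  ultimately show ?case
    by (simp add: chains_ending_0 chain_filling_def bij_betw_def)
next
  case (Suc k)
  have "bij_betw (chain_filling k) (chains_ending k (remove_up D a))
      {F. laguerre_history k (remove_up D a) F}" if "removable_up D a" for a
    using Suc.IH dyck_path_remove_up[OF Suc.prems that] by blast
  then show ?case
    using image_chain_filling_Suc[OF Suc.prems] inj_on_chain_filling_Suc[OF Suc.prems]
    by (simp add: bij_betw_def)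
qed

theorem mainTheorem8:
  fixes n :: nat and D :: path
  assumes "dyck_path n D"
  shows "(\<forall>Ds\<in>chains_ending n D. laguerre_history n D (chain_filling n Ds))
       \<and> bij_betw (chain_filling n) (chains_ending n D) {F. laguerre_history n D F}"
  using bij_betw_chain_filling[OF assms] bij_betw_apply by fastforce

end
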